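(* Let $a,b>0$, $c\ge 0$, $s_0>1$, and let $(u_0,v_0)$ with $u_0,v_0>0$ satisfy $$u_0^3+cu_0=\frac{a+1}{b}u_0^2+\frac{ac}{b},\qquad v_0=u_0^2+c .$$ Consider, for the parameter $\gamma>0$, the delay differential system $$u'(t)=\gamma\left\{\frac{[u(t)+u_0]^2}{v(t-s_0)+v_0}-b[u(t)+u_0]+a\right\},\qquad v'(t)=\gamma\left\{[u(t-1)+u_0]^2-[v(t)+v_0]+c\right\},$$ which has the equilibrium $(u,v)=(0,0)$. Put $$b_0=b-\frac{2u_0}{v_0},\quad b_1=b_0+1,\quad b_2=\frac{2u_0^3}{v_0^2},\quad \tau=\frac{s_0+1}{2},$$ and let $M(\lambda,\gamma)=\lambda^2+\gamma b_1\lambda+\gamma^2 b_0+\gamma^2 b_2e^{-2\tau\lambda}$ be the characteristic function of the linearization at $0$. (i) Suppose $b_1\neq 0$ and $b_0^2-b_2^2<0$. Let $\delta=b_1^2(b_1^2-4b_0)+4b_2^2$, $\Omega_+=\dfrac{-b_1^2+\sqrt{\delta}}{2b_2}$, let $$\omega_0=\frac{\arccos(\Omega_+)+2\pi j}{2\tau}$$ for some $j\in\mathbb{Z}$, where the branch of $\arccos$ is chosen so that $\omega_0>0$ and $\sin(2\omega_0\tau)$ has the same sign as $b_1$, and let $$\gamma_0=\frac{b_1\omega_0}{b_2\sin(2\omega_0\tau)} .$$ (ii) Alternatively, suppose $b_1=0$ and $b_2>1$, and for some $k\in\mathbb{N}$ let $$\gamma_0=\frac{k\pi}{\tau\sqrt{b_2-1}},\qquad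 \omega_0=\frac{k\pi}{\tau}.$$ In either case the system undergoes a Hopf bifurcation at $\gamma=\gamma_0$ with frequency $\omega_0$: $\lambda=i\omega_0$ is a root of $M(\lambda,\gamma_0)=0$, this root is simple, the transversality condition $$\operatorname{Re}\left(\frac{d\lambda}{d\gamma}\right)\Big|_{\lambda=i\omega_0,\ \gamma=\gamma_0}=\frac{4\tau\gamma_0\omega_0^4+2\tau\gamma_0^3\omega_0^2(b_1^2-2b_0)}{(\gamma_0^2b_1-2\gamma_0\tau\omega_0^2+2\gamma_0^3\tau b_0)^2+(2\gamma_0\omega_0+2\gamma_0^2\tau b_1\omega_0)^2}>0$$ holds (where $\lambda(\gamma)$ is the root branch through $i\omega_0$), and no $ni\omega_0$ with $n\in\mathbb{Z}\setminus\{\pm1\}$ is a root of $M(\lambda,\gamma_0)=0$.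
   Context: The characteristic function $M(\lambda,\gamma)$ is the determinant of the characteristic matrix $\Delta(\lambda,\gamma)=\lambda I_2-\gamma(A+e^{-\lambda}B_1+e^{-\lambda s_0}B_2)$, where $A=\begin{pmatrix}\frac{2u_0}{v_0}-b&0\\0&-1\end{pmatrix}$, $B_1=\begin{pmatrix}0&0\\2u_0&0\end{pmatrix}$, $B_2=\begin{pmatrix}0&-\frac{u_0^2}{v_0^2}\\0&0\end{pmatrix}$ are the partial Jacobians of the right-hand side at $0$ with respect to the undelayed state, the state delayed by $1$, and the state delayed by $s_0$, respectively. *)

theory Defs
  imports "HOL-Analysis.Analysis"
begin

text \<open>Partial Jacobians of the right-hand side at the equilibrium 0 (complexified),
  with respect to the undelayed state, the state delayed by 1 and the state delayed by s0.\<close>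

definition jacA :: "real \<Rightarrow> real \<Rightarrow> real \<Rightarrow> complex^2^2" where
  "jacA b u0 v0 = vector [vector [complex_of_real (2 * u0 / v0 - b), 0], vector [0, -1]]"

definition jacB1 :: "real \<Rightarrow> complex^2^2" where
  "jacB1 u0 = vector [vector [0, 0], vector [complex_of_real (2 * u0), 0]]"

definition jacB2 :: "real \<Rightarrow> real \<Rightarrow> complex^2^2" where
  "jacB2 u0 v0 = vector [vector [0, complex_of_real (- (u0^2 / v0^2))], vector [0, 0]]"

definition char_matrix :: "real \<Rightarrow> real \<Rightarrow> real \<Rightarrow> real \<Rightarrow> complex \<Rightarrow> real \<Rightarrow> complex^2^2" where
  "char_matrix b u0 v0 s0 lam gam =
     mat lam - (\<chi> i j. complex_of_real gam *
        (jacA b u0 v0 $ i $ j + exp (- lam) * jacB1 u0 $ i $ j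
         + exp (- lam * complex_of_real s0) * jacB2 u0 v0 $ i $ j))"

definition char_fun :: "real \<Rightarrow> real \<Rightarrow> real \<Rightarrow> real \<Rightarrow> complex \<Rightarrow> real \<Rightarrow> complex" where
  "char_fun b u0 v0 s0 lam gam = det (char_matrix b u0 v0 s0 lam gam)"

text \<open>Derivative of the root branch lambda(gamma) of M(lambda,gamma)=0, obtained by

  d lambda / d gamma = - (dM/dgamma) / (dM/dlambda) (implicit differentiation along the root branch)

\<close>

definition dlam_dgam :: "(complex \<Rightarrow> real \<Rightarrow> complex) \<Rightarrow> complex \<Rightarrow> real \<Rightarrow> complex" where
  "dlam_dgam M lam gam = - vector_derivative (\<lambda>g. M lam g) (at gam) / deriv (\<lambda>l. M l gam) lam"

end

theory Submission
  imports Defs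
begin

(* Expanding the determinant gives
     M(lambda, gamma) = lambda^2 + gamma b1 lambda + gamma^2 b0 + gamma^2 b2 exp (-2 tau lambda),
   the two delays entering only through the product of the off-diagonal entries.  For lambda = i omega the equation M = 0
   splits into omega^2 = gamma^2 (b0 + b2 cos (2 tau omega)) and b1 omega = gamma b2 sin (2 tau omega).
   If b1 <> 0, eliminating omega leaves a quadratic equation for cos (2 tau omega) whose only root
   in [-1, 1] is Omega+; if b1 = 0, the second equation forces cos (2 tau omega) = 1.  Either way
   all imaginary roots at gamma0 have the same modulus omega0, which excludes the harmonics.
   Evaluating dM/dlambda and dM/dgamma at i omega0 with the help of the two root equations yields
   the transversality formula, whose numerator has the sign of
   2 omega0^2 + gamma0^2 (b1^2 - 2 b0) = gamma0^2 (2 b2 cos (2 tau omega0) + b1^2) > 0. *)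

definition char_quasipoly :: "real \<Rightarrow> real \<Rightarrow> real \<Rightarrow> real \<Rightarrow> complex \<Rightarrow> real \<Rightarrow> complex" where
  "char_quasipoly b0 b1 b2 \<tau> l \<gamma> =
     l^2 + of_real \<gamma> * of_real b1 * l + (of_real \<gamma>)^2 * of_real b0
     + (of_real \<gamma>)^2 * of_real b2 * exp (- of_real (2 * \<tau>) * l)"

lemma char_fun_eq_char_quasipoly:
  assumes "v0 \<noteq> 0"
  shows "char_fun b u0 v0 s0 =
    char_quasipoly (b - 2 * u0 / v0) (b - 2 * u0 / v0 + 1) (2 * u0^3 / v0^2) ((s0 + 1) / 2)"
proof (intro ext)
  fix l \<gamma>
  show "char_fun b u0 v0 s0 l \<gamma> =
    char_quasipoly (b - 2 * u0 / v0) (b - 2 * u0 / v0 + 1) (2 * u0^3 / v0^2) ((s0 + 1) / 2) l \<gamma>"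
    unfolding char_fun_def char_matrix_def char_quasipoly_def det_2 jacA_def jacB1_def jacB2_def
    using assms
    by (simp add: mat_def) (simp add: algebra_simps power2_eq_square power3_eq_cube add_divide_distrib flip: exp_add)
qed

lemma exp_neg_imag:
  "exp (- of_real t * (\<i> * of_real \<omega>)) = Complex (cos (t * \<omega>)) (- sin (t * \<omega>))"
  by (simp add: complex_eq_iff Re_exp Im_exp)

lemma char_quasipoly_imag:
  "char_quasipoly b0 b1 b2 \<tau> (\<i> * of_real \<omega>) \<gamma> =
     Complex (\<gamma>^2 * (b0 + b2 * cos (2 * \<tau> * \<omega>)) - \<omega>^2) (\<gamma> * (b1 * \<omega> - \<gamma> * b2 * sin (2 * \<tau> * \<omega>)))"
  unfolding char_quasipoly_def exp_neg_imag by (simp add: complex_eq_iff algebra_simps power2_eq_square)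

lemma deriv_char_quasipoly_imag:
  "deriv (\<lambda>l. char_quasipoly b0 b1 b2 \<tau> l \<gamma>) (\<i> * of_real \<omega>) =
     Complex (\<gamma> * b1 - 2 * \<tau> * \<gamma>^2 * b2 * cos (2 * \<tau> * \<omega>))
             (2 * \<omega> + 2 * \<tau> * \<gamma>^2 * b2 * sin (2 * \<tau> * \<omega>))"
proof -
  have "((\<lambda>l. char_quasipoly b0 b1 b2 \<tau> l \<gamma>) has_field_derivative
      2 * l + of_real \<gamma> * of_real b1 - of_real (2 * \<tau>) * (of_real \<gamma>)^2 * of_real b2 * exp (- of_real (2 * \<tau>) * l))
      (at l)" for l
    unfolding char_quasipoly_def by (auto intro!: derivative_eq_intros simp: algebra_simps)
  from DERIV_imp_deriv[OF this[of "\<i> * of_real \<omega>"]] show ?thesis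
    unfolding exp_neg_imag by (simp add: complex_eq_iff power2_eq_square)
qed

lemma vector_derivative_char_quasipoly_imag:
  "vector_derivative (\<lambda>g. char_quasipoly b0 b1 b2 \<tau> (\<i> * of_real \<omega>) g) (at \<gamma>) =
     Complex (2 * \<gamma> * (b0 + b2 * cos (2 * \<tau> * \<omega>))) (b1 * \<omega> - 2 * \<gamma> * b2 * sin (2 * \<tau> * \<omega>))"
proof -
  have "((\<lambda>g. char_quasipoly b0 b1 b2 \<tau> l g) has_vector_derivative
      l * of_real b1 + 2 * of_real \<gamma> * of_real b0 + 2 * of_real \<gamma> * of_real b2 * exp (- of_real (2 * \<tau>) * l))
      (at \<gamma>)" for l
    unfolding char_quasipoly_def
    by (rule has_vector_derivative_real_field) (auto intro!: derivative_eq_intros simp: algebra_simps)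
  from vector_derivative_at[OF this[of "\<i> * of_real \<omega>"]] show ?thesis
    unfolding exp_neg_imag by (simp add: complex_eq_iff algebra_simps)
qed

definition imag_root_eqs :: "real \<Rightarrow> real \<Rightarrow> real \<Rightarrow> real \<Rightarrow> real \<Rightarrow> real \<Rightarrow> bool" where
  "imag_root_eqs b0 b1 b2 \<tau> \<gamma> \<omega> \<longleftrightarrow>
     \<omega>^2 = \<gamma>^2 * (b0 + b2 * cos (2 * \<tau> * \<omega>)) \<and> b1 * \<omega> = \<gamma> * b2 * sin (2 * \<tau> * \<omega>)"

lemma char_quasipoly_imag_eq_0_iff:
  assumes "\<gamma> \<noteq> 0"
  shows "char_quasipoly b0 b1 b2 \<tau> (\<i> * of_real \<omega>) \<gamma> = 0 \<longleftrightarrow> imag_root_eqs b0 b1 b2 \<tau> \<gamma> \<omega>"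
  using assms unfolding char_quasipoly_imag imag_root_eqs_def complex_eq_iff by auto

lemma imag_root_derivative_identities:
  assumes "imag_root_eqs b0 b1 b2 \<tau> \<gamma> \<omega>"
  defines "L \<equiv> deriv (\<lambda>l. char_quasipoly b0 b1 b2 \<tau> l \<gamma>) (\<i> * of_real \<omega>)"
    and "G \<equiv> vector_derivative (\<lambda>g. char_quasipoly b0 b1 b2 \<tau> (\<i> * of_real \<omega>) g) (at \<gamma>)"
  shows "\<gamma> * Re L = \<gamma>^2 * b1 - 2 * \<gamma> * \<tau> * \<omega>^2 + 2 * \<gamma>^3 * \<tau> * b0"
    and "\<gamma> * Im L = 2 * \<gamma> * \<omega> + 2 * \<gamma>^2 * \<tau> * b1 * \<omega>"
    and "\<gamma> * Re G = 2 * \<omega>^2"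
    and "\<gamma> * Im G = - \<gamma> * b1 * \<omega>"
proof -
  have C: "\<gamma>^2 * b2 * cos (2 * \<tau> * \<omega>) = \<omega>^2 - \<gamma>^2 * b0"
    and S: "\<gamma> * b2 * sin (2 * \<tau> * \<omega>) = b1 * \<omega>"
    using assms(1) unfolding imag_root_eqs_def by (simp_all add: algebra_simps)
  have "\<gamma> * Re L = \<gamma>^2 * b1 - 2 * \<tau> * \<gamma> * (\<gamma>^2 * b2 * cos (2 * \<tau> * \<omega>))"
    unfolding L_def deriv_char_quasipoly_imag by (simp add: algebra_simps power2_eq_square)
  then show "\<gamma> * Re L = \<gamma>^2 * b1 - 2 * \<gamma> * \<tau> * \<omega>^2 + 2 * \<gamma>^3 * \<tau> * b0"
    unfolding C by (simp add: algebra_simps power2_eq_square power3_eq_cube)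
  have "\<gamma> * Im L = 2 * \<gamma> * \<omega> + 2 * \<tau> * \<gamma>^2 * (\<gamma> * b2 * sin (2 * \<tau> * \<omega>))"
    unfolding L_def deriv_char_quasipoly_imag by (simp add: algebra_simps power2_eq_square)
  then show "\<gamma> * Im L = 2 * \<gamma> * \<omega> + 2 * \<gamma>^2 * \<tau> * b1 * \<omega>"
    unfolding S by (simp add: algebra_simps)
  have "\<gamma> * Re G = 2 * \<gamma>^2 * b0 + 2 * (\<gamma>^2 * b2 * cos (2 * \<tau> * \<omega>))"
    unfolding G_def vector_derivative_char_quasipoly_imag by (simp add: algebra_simps power2_eq_square)
  then show "\<gamma> * Re G = 2 * \<omega>^2"
    unfolding C by simp
  have "\<gamma> * Im G = \<gamma> * b1 * \<omega> - 2 * \<gamma> * (\<gamma> * b2 * sin (2 * \<tau> * \<omega>))"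
    unfolding G_def vector_derivative_char_quasipoly_imag by (simp add: algebra_simps)
  then show "\<gamma> * Im G = - \<gamma> * b1 * \<omega>"
    unfolding S by simp
qed

lemma imag_root_transversality:
  assumes "\<gamma> > 0" "\<omega> > 0" "\<tau> > 0" "imag_root_eqs b0 b1 b2 \<tau> \<gamma> \<omega>"
    and crossing_sign: "2 * \<omega>^2 + \<gamma>^2 * (b1^2 - 2 * b0) > 0"
  defines "N \<equiv> 4 * \<tau> * \<gamma> * \<omega>^4 + 2 * \<tau> * \<gamma>^3 * \<omega>^2 * (b1^2 - 2 * b0)"
    and "D \<equiv> (\<gamma>^2 * b1 - 2 * \<gamma> * \<tau> * \<omega>^2 + 2 * \<gamma>^3 * \<tau> * b0)^2
             + (2 * \<gamma> * \<omega> + 2 * \<gamma>^2 * \<tau> * b1 * \<omega>)^2"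
  shows "deriv (\<lambda>l. char_quasipoly b0 b1 b2 \<tau> l \<gamma>) (\<i> * of_real \<omega>) \<noteq> 0"
    and "Re (dlam_dgam (char_quasipoly b0 b1 b2 \<tau>) (\<i> * of_real \<omega>) \<gamma>) = N / D"
    and "N / D > 0"
proof -
  define L where "L = deriv (\<lambda>l. char_quasipoly b0 b1 b2 \<tau> l \<gamma>) (\<i> * of_real \<omega>)"
  define G where "G = vector_derivative (\<lambda>g. char_quasipoly b0 b1 b2 \<tau> (\<i> * of_real \<omega>) g) (at \<gamma>)"
  note ids = imag_root_derivative_identities[OF assms(4), folded L_def G_def]
  have N_pos: "N > 0"
  proof -
    have "N = 2 * \<tau> * \<gamma> * \<omega>^2 * (2 * \<omega>^2 + \<gamma>^2 * (b1^2 - 2 * b0))"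
      unfolding N_def by (simp add: algebra_simps power2_eq_square power3_eq_cube power4_eq_xxxx)
    then show ?thesis using assms(1-3) crossing_sign by simp
  qed
  have inner: "N = - (\<gamma>^2 * (Re G * Re L + Im G * Im L))"
  proof -
    have "\<gamma>^2 * (Re G * Re L + Im G * Im L) = (\<gamma> * Re G) * (\<gamma> * Re L) + (\<gamma> * Im G) * (\<gamma> * Im L)"
      by (simp add: algebra_simps power2_eq_square)
    then show ?thesis unfolding ids N_def
      by (simp add: algebra_simps power2_eq_square power3_eq_cube power4_eq_xxxx)
  qed
  have norm: "D = \<gamma>^2 * ((Re L)^2 + (Im L)^2)"
  proof -
    have "\<gamma>^2 * ((Re L)^2 + (Im L)^2) = (\<gamma> * Re L)^2 + (\<gamma> * Im L)^2"
      by (simp add: algebra_simps power2_eq_square)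
    then show ?thesis unfolding ids D_def by simp
  qed
  have L_nonzero: "L \<noteq> 0"
    using inner N_pos by auto
  then show "deriv (\<lambda>l. char_quasipoly b0 b1 b2 \<tau> l \<gamma>) (\<i> * of_real \<omega>) \<noteq> 0"
    unfolding L_def .
  have "(Re L)^2 + (Im L)^2 > 0"
    using L_nonzero by (simp add: complex_eq_iff sum_power2_gt_zero_iff)
  then have D_pos: "D > 0"
    unfolding norm using assms(1) by simp
  have "Re (dlam_dgam (char_quasipoly b0 b1 b2 \<tau>) (\<i> * of_real \<omega>) \<gamma>) = - (Re G * Re L + Im G * Im L) / ((Re L)^2 + (Im L)^2)"
    unfolding dlam_dgam_def G_def[symmetric] L_def[symmetric]
    by (simp add: Re_divide power2_eq_square add_divide_distrib diff_divide_distrib)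
  also have "\<dots> = N / D"
    unfolding norm inner using assms(1) by (simp add: minus_divide_left)
  finally show "Re (dlam_dgam (char_quasipoly b0 b1 b2 \<tau>) (\<i> * of_real \<omega>) \<gamma>) = N / D" .
  show "N / D > 0"
    using N_pos D_pos by simp
qed

definition hopf_crossing :: "real \<Rightarrow> real \<Rightarrow> real \<Rightarrow> real \<Rightarrow> real \<Rightarrow> real \<Rightarrow> bool" where
  "hopf_crossing b0 b1 b2 \<tau> \<gamma> \<omega> \<longleftrightarrow>
     \<gamma> > 0 \<and> \<omega> > 0 \<and> imag_root_eqs b0 b1 b2 \<tau> \<gamma> \<omega>
     \<and> 2 * \<omega>^2 + \<gamma>^2 * (b1^2 - 2 * b0) > 0
     \<and> (\<forall>\<omega>'. imag_root_eqs b0 b1 b2 \<tau> \<gamma> \<omega>' \<longrightarrow> \<omega>'^2 = \<omega>^2)"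

lemma hopf_crossing_no_harmonic_root:
  assumes "hopf_crossing b0 b1 b2 \<tau> \<gamma> \<omega>"
    and "char_quasipoly b0 b1 b2 \<tau> (of_int n * \<i> * of_real \<omega>) \<gamma> = 0"
  shows "n \<in> {1, -1}"
proof -
  have pos: "\<gamma> > 0" "\<omega> > 0"
    and same_modulus: "\<And>\<omega>'. imag_root_eqs b0 b1 b2 \<tau> \<gamma> \<omega>' \<Longrightarrow> \<omega>'^2 = \<omega>^2"
    using assms(1) unfolding hopf_crossing_def by blast+
  have "char_quasipoly b0 b1 b2 \<tau> (\<i> * of_real (of_int n * \<omega>)) \<gamma> = 0"
    using assms(2) by (simp add: mult_ac)
  then have "(of_int n * \<omega>)^2 = \<omega>^2"
    using same_modulus char_quasipoly_imag_eq_0_iff[of \<gamma>] pos(1) by blast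
  then have "of_int (n^2) = (of_int 1 :: real)"
    using pos(2) by (simp add: power_mult_distrib)
  then have "n^2 = 1"
    by (simp only: of_int_eq_iff)
  then show ?thesis
    by (auto simp: power2_eq_1_iff)
qed

lemma hopf_crossing_b1_zero:
  assumes "\<tau> > 0" "b2 > 1" "k \<ge> 1"
    and \<gamma>: "\<gamma> = real k * pi / (\<tau> * sqrt (b2 - 1))" and \<omega>: "\<omega> = real k * pi / \<tau>"
  shows "hopf_crossing (-1) 0 b2 \<tau> \<gamma> \<omega>"
proof -
  have "sqrt (b2 - 1) > 0" "real k * pi > 0"
    using assms(2,3) by auto
  then have pos: "\<gamma> > 0" "\<omega> > 0" and \<omega>_sq: "\<omega>^2 = \<gamma>^2 * (b2 - 1)"
    using assms(1,2) unfolding \<gamma> \<omega> by (auto simp: power_divide power_mult_distrib)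
  have "2 * \<tau> * \<omega> = 2 * pi * of_int (int k)"
    unfolding \<omega> using assms(1) by simp
  then have cos_1: "cos (2 * \<tau> * \<omega>) = 1"
    by (simp only: cos_int_2pin)
  have roots_cos_1: "cos (2 * \<tau> * \<omega>') = 1" if root: "imag_root_eqs (-1) 0 b2 \<tau> \<gamma> \<omega>'" for \<omega>'
  proof -
    have "sin (2 * \<tau> * \<omega>') = 0"
      using root pos assms(2) unfolding imag_root_eqs_def by simp
    then have "(cos (2 * \<tau> * \<omega>'))^2 = 1"
      using sin_cos_squared_add[of "2 * \<tau> * \<omega>'"] by simp
    then have "cos (2 * \<tau> * \<omega>') = 1 \<or> cos (2 * \<tau> * \<omega>') = -1"
      by (simp add: power2_eq_1_iff)
    moreover have "cos (2 * \<tau> * \<omega>') \<noteq> -1"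
    proof
      assume "cos (2 * \<tau> * \<omega>') = -1"
      then have "\<omega>'^2 = - (\<gamma>^2 * (1 + b2))"
        using root unfolding imag_root_eqs_def by (simp add: algebra_simps)
      moreover have "\<gamma>^2 * (1 + b2) > 0"
        using pos assms(2) by simp
      ultimately show False
        using zero_le_power2[of \<omega>'] by linarith
    qed
    ultimately show ?thesis
      by blast
  qed
  have "imag_root_eqs (-1) 0 b2 \<tau> \<gamma> \<omega>"
    unfolding imag_root_eqs_def using \<omega>_sq cos_1 cos_one_sin_zero[OF cos_1] by simp
  moreover have "\<omega>'^2 = \<omega>^2" if "imag_root_eqs (-1) 0 b2 \<tau> \<gamma> \<omega>'" for \<omega>'
    using that roots_cos_1[OF that] \<omega>_sq unfolding imag_root_eqs_def by simp
  moreover have "2 * \<omega>^2 + \<gamma>^2 * (0^2 - 2 * -1) > 0"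
    using pos by (simp add: add_pos_pos)
  ultimately show ?thesis
    unfolding hopf_crossing_def using pos by blast
qed

definition hopf_delta :: "real \<Rightarrow> real \<Rightarrow> real \<Rightarrow> real" where
  "hopf_delta b0 b1 b2 = b1^2 * (b1^2 - 4 * b0) + 4 * b2^2"

definition hopf_Omega :: "real \<Rightarrow> real \<Rightarrow> real \<Rightarrow> real" where
  "hopf_Omega b0 b1 b2 = (- (b1^2) + sqrt (hopf_delta b0 b1 b2)) / (2 * b2)"

lemma sqrt_hopf_delta_gt:
  assumes "b1 \<noteq> 0" "b0 < b2"
  shows "sqrt (hopf_delta b0 b1 b2) > \<bar>b1^2 - 2 * b2\<bar>"
proof -
  have "hopf_delta b0 b1 b2 - (b1^2 - 2 * b2)^2 = 4 * b1^2 * (b2 - b0)"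
    unfolding hopf_delta_def by (simp add: algebra_simps power2_eq_square)
  moreover have "4 * b1^2 * (b2 - b0) > 0"
    using assms by simp
  ultimately have "\<bar>b1^2 - 2 * b2\<bar>^2 < hopf_delta b0 b1 b2"
    unfolding power2_abs by linarith
  then show ?thesis
    by (rule real_less_rsqrt)
qed

lemma hopf_Omega_bounds:
  assumes "b2 > 0" "\<bar>b0\<bar> < b2"
  shows "-1 \<le> hopf_Omega b0 b1 b2" and "hopf_Omega b0 b1 b2 \<le> 1"
proof -
  have "(b1^2 + 2 * b2)^2 - hopf_delta b0 b1 b2 = 4 * b1^2 * (b0 + b2)"
    unfolding hopf_delta_def by (simp add: algebra_simps power2_eq_square)
  moreover have "4 * b1^2 * (b0 + b2) \<ge> 0"
    using assms(2) by simp
  ultimately have "hopf_delta b0 b1 b2 \<le> (b1^2 + 2 * b2)^2"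
    by linarith
  then have "sqrt (hopf_delta b0 b1 b2) \<le> b1^2 + 2 * b2"
    using assms(1) by (intro real_le_lsqrt) auto
  then show "hopf_Omega b0 b1 b2 \<le> 1"
    unfolding hopf_Omega_def using assms(1) by simp
  have "hopf_delta b0 b1 b2 - (b1^2 - 2 * b2)^2 = 4 * b1^2 * (b2 - b0)"
    unfolding hopf_delta_def by (simp add: algebra_simps power2_eq_square)
  moreover have "4 * b1^2 * (b2 - b0) \<ge> 0"
    using assms(2) by simp
  ultimately have "(b1^2 - 2 * b2)^2 \<le> hopf_delta b0 b1 b2"
    by linarith
  then have "b1^2 - 2 * b2 \<le> sqrt (hopf_delta b0 b1 b2)"
    by (rule real_le_rsqrt)
  then show "-1 \<le> hopf_Omega b0 b1 b2"
    unfolding hopf_Omega_def using assms(1) by (simp add: le_divide_eq)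
qed

lemma imag_root_eqs_iff_quadratic:
  assumes "b1 \<noteq> 0" "\<gamma> \<noteq> 0" and sin_eq: "b1 * \<omega> = \<gamma> * b2 * sin (2 * \<tau> * \<omega>)"
  shows "imag_root_eqs b0 b1 b2 \<tau> \<gamma> \<omega> \<longleftrightarrow>
    (2 * b2 * cos (2 * \<tau> * \<omega>) + b1^2)^2 = hopf_delta b0 b1 b2"
proof -
  define C where "C = cos (2 * \<tau> * \<omega>)"
  have "b1^2 * \<omega>^2 = \<gamma>^2 * b2^2 * (1 - C^2)"
    using arg_cong[OF sin_eq, of "\<lambda>x. x^2"] unfolding C_def
    by (simp add: power_mult_distrib sin_squared_eq)
  then have key: "4 * b1^2 * (\<omega>^2 - \<gamma>^2 * (b0 + b2 * C)) =
      \<gamma>^2 * (hopf_delta b0 b1 b2 - (2 * b2 * C + b1^2)^2)"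
    unfolding hopf_delta_def by (simp add: algebra_simps power2_eq_square)
  have "\<omega>^2 = \<gamma>^2 * (b0 + b2 * C) \<longleftrightarrow> 4 * b1^2 * (\<omega>^2 - \<gamma>^2 * (b0 + b2 * C)) = 0"
    using assms(1) by simp
  also have "\<dots> \<longleftrightarrow> (2 * b2 * C + b1^2)^2 = hopf_delta b0 b1 b2"
    unfolding key using assms(2) by auto
  finally have "\<omega>^2 = \<gamma>^2 * (b0 + b2 * C) \<longleftrightarrow> (2 * b2 * C + b1^2)^2 = hopf_delta b0 b1 b2" .
  then show ?thesis
    unfolding imag_root_eqs_def C_def using sin_eq by simp
qed

lemma cos_imag_root_eq_hopf_Omega:
  assumes "b2 > 0" "b1 \<noteq> 0" "b0 < b2" "\<gamma> \<noteq> 0" and root: "imag_root_eqs b0 b1 b2 \<tau> \<gamma> \<omega>"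
  shows "cos (2 * \<tau> * \<omega>) = hopf_Omega b0 b1 b2"
proof -
  define x where "x = 2 * b2 * cos (2 * \<tau> * \<omega>) + b1^2"
  have sqrt_gt: "sqrt (hopf_delta b0 b1 b2) > \<bar>b1^2 - 2 * b2\<bar>"
    using sqrt_hopf_delta_gt[OF assms(2,3)] .
  have "b1 * \<omega> = \<gamma> * b2 * sin (2 * \<tau> * \<omega>)"
    using root unfolding imag_root_eqs_def by simp
  then have "x^2 = hopf_delta b0 b1 b2"
    using imag_root_eqs_iff_quadratic[OF assms(2,4)] root unfolding x_def by simp
  also have "\<dots> = (sqrt (hopf_delta b0 b1 b2))^2"
    using le_less_trans[OF abs_ge_zero sqrt_gt] by simp
  finally have "x^2 = (sqrt (hopf_delta b0 b1 b2))^2" .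
  then have "x = sqrt (hopf_delta b0 b1 b2) \<or> x = - sqrt (hopf_delta b0 b1 b2)"
    by (simp add: power2_eq_iff)
  moreover have "x \<ge> b1^2 - 2 * b2" \<comment> \<open>the negative root would need \<open>cos (2 \<tau> \<omega>) < -1\<close>\<close>
    unfolding x_def using mult_left_mono[OF cos_ge_minus_one, of b2 "2 * \<tau> * \<omega>"] assms(1) by simp
  ultimately have "x = sqrt (hopf_delta b0 b1 b2)"
    using sqrt_gt by auto
  then show ?thesis
    unfolding x_def hopf_Omega_def using assms(1) by (simp add: field_simps)
qed

lemma hopf_crossing_b1_nonzero:
  assumes "b2 > 0" "b1 \<noteq> 0" "b0^2 - b2^2 < 0"
    and arccos_branch: "\<exists>j::int. \<exists>\<sigma>\<in>{1, -1::real}.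
      2 * \<tau> * \<omega> = \<sigma> * arccos (hopf_Omega b0 b1 b2) + 2 * pi * of_int j"
    and "\<omega> > 0" and sgn_sin: "sgn (sin (2 * \<omega> * \<tau>)) = sgn b1"
    and \<gamma>: "\<gamma> = b1 * \<omega> / (b2 * sin (2 * \<omega> * \<tau>))"
  shows "hopf_crossing b0 b1 b2 \<tau> \<gamma> \<omega>"
proof -
  define C where "C = cos (2 * \<tau> * \<omega>)"
  define S where "S = sin (2 * \<tau> * \<omega>)"
  have b0: "\<bar>b0\<bar> < b2"
    using assms(1,3) by (simp add: power_less_imp_less_base[of "\<bar>b0\<bar>" 2 b2])
  have sqrt_pos: "sqrt (hopf_delta b0 b1 b2) > 0"
    using le_less_trans[OF abs_ge_zero sqrt_hopf_delta_gt] assms(2) b0 by auto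
  have Omega_sqrt: "2 * b2 * hopf_Omega b0 b1 b2 + b1^2 = sqrt (hopf_delta b0 b1 b2)"
    unfolding hopf_Omega_def using assms(1) by simp
  have C_eq: "C = hopf_Omega b0 b1 b2"
  proof -
    obtain j :: int and \<sigma> :: real where "\<sigma> \<in> {1, -1}"
      and "2 * \<tau> * \<omega> = \<sigma> * arccos (hopf_Omega b0 b1 b2) + 2 * pi * of_int j"
      using arccos_branch by blast
    then show ?thesis
      unfolding C_def using hopf_Omega_bounds[OF assms(1) b0] by (auto simp: cos_add)
  qed
  have sgn_S: "sgn S = sgn b1" and \<gamma>_def: "\<gamma> = b1 * \<omega> / (b2 * S)"
    using sgn_sin \<gamma> unfolding S_def by (simp_all add: mult_ac)
  have b1_S: "b1 * S > 0"
    using sgn_S assms(2) by (auto simp: sgn_if zero_less_mult_iff split: if_splits)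
  then have "S \<noteq> 0"
    by auto
  have \<gamma>_S: "\<gamma> = (b1 * S) * \<omega> / (b2 * S^2)"
    unfolding \<gamma>_def using \<open>S \<noteq> 0\<close> by (simp add: power2_eq_square)
  then have "\<gamma> > 0"
    using b1_S assms(1,5) \<open>S \<noteq> 0\<close> by simp
  have sin_eq: "b1 * \<omega> = \<gamma> * b2 * S"
    using \<gamma>_S assms(1) \<open>S \<noteq> 0\<close> by (simp add: power2_eq_square)
  have "(2 * b2 * C + b1^2)^2 = hopf_delta b0 b1 b2"
    unfolding C_eq Omega_sqrt using sqrt_pos by simp
  then have root: "imag_root_eqs b0 b1 b2 \<tau> \<gamma> \<omega>"
    using imag_root_eqs_iff_quadratic[of b1 \<gamma>] sin_eq assms(2) \<open>\<gamma> > 0\<close>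
    unfolding S_def C_def by simp
  then have \<omega>_sq: "\<omega>^2 = \<gamma>^2 * (b0 + b2 * C)"
    unfolding imag_root_eqs_def C_def by simp
  have "2 * \<omega>^2 + \<gamma>^2 * (b1^2 - 2 * b0) = \<gamma>^2 * (2 * b2 * C + b1^2)"
    unfolding \<omega>_sq by (simp add: algebra_simps)
  also have "\<dots> = \<gamma>^2 * sqrt (hopf_delta b0 b1 b2)"
    unfolding C_eq Omega_sqrt ..
  finally have crossing: "2 * \<omega>^2 + \<gamma>^2 * (b1^2 - 2 * b0) > 0"
    using \<open>\<gamma> > 0\<close> sqrt_pos by simp
  have "\<omega>'^2 = \<omega>^2" if "imag_root_eqs b0 b1 b2 \<tau> \<gamma> \<omega>'" for \<omega>'
  proof -
    have "cos (2 * \<tau> * \<omega>') = C"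
      using cos_imag_root_eq_hopf_Omega[OF assms(1,2) _ _ that] b0 \<open>\<gamma> > 0\<close> C_eq by simp
    then show ?thesis
      using that \<omega>_sq unfolding imag_root_eqs_def by simp
  qed
  then show ?thesis
    unfolding hopf_crossing_def using \<open>\<gamma> > 0\<close> assms(5) root crossing by blast
qed

theorem proposition1:
  fixes a b c s0 u0 v0 b0 b1 b2 \<tau> \<delta> \<Omega>p \<gamma>0 \<omega>0 :: real
  assumes "a > 0" and "b > 0" and "c \<ge> 0" and "s0 > 1"
    and "u0 > 0" and "v0 > 0"
    and "u0^3 + c * u0 = (a + 1) / b * u0^2 + a * c / b"
    and "v0 = u0^2 + c"
    and "b0 = b - 2 * u0 / v0" and "b1 = b0 + 1" and "b2 = 2 * u0^3 / v0^2"
    and "\<tau> = (s0 + 1) / 2"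
    and "\<delta> = b1^2 * (b1^2 - 4 * b0) + 4 * b2^2"
    and "\<Omega>p = (- (b1^2) + sqrt \<delta>) / (2 * b2)"
    and cases:
      "(b1 \<noteq> 0 \<and> b0^2 - b2^2 < 0 \<and>
         (\<exists>j::int. \<exists>\<sigma>\<in>{1, -1::real}. 2 * \<tau> * \<omega>0 = \<sigma> * arccos \<Omega>p + 2 * pi * of_int j) \<and>
         \<omega>0 > 0 \<and> sgn (sin (2 * \<omega>0 * \<tau>)) = sgn b1 \<and>
         \<gamma>0 = b1 * \<omega>0 / (b2 * sin (2 * \<omega>0 * \<tau>)))
       \<or>
       (b1 = 0 \<and> b2 > 1 \<and>
         (\<exists>k::nat. k \<ge> 1 \<and> \<gamma>0 = real k * pi / (\<tau> * sqrt (b2 - 1)) \<and> \<omega>0 = real k * pi / \<tau>))"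
  shows "char_fun b u0 v0 s0 (\<i> * complex_of_real \<omega>0) \<gamma>0 = 0
    \<and> deriv (\<lambda>l. char_fun b u0 v0 s0 l \<gamma>0) (\<i> * complex_of_real \<omega>0) \<noteq> 0
    \<and> Re (dlam_dgam (char_fun b u0 v0 s0) (\<i> * complex_of_real \<omega>0) \<gamma>0)
        = (4 * \<tau> * \<gamma>0 * \<omega>0^4 + 2 * \<tau> * \<gamma>0^3 * \<omega>0^2 * (b1^2 - 2 * b0))
          / ((\<gamma>0^2 * b1 - 2 * \<gamma>0 * \<tau> * \<omega>0^2 + 2 * \<gamma>0^3 * \<tau> * b0)^2
             + (2 * \<gamma>0 * \<omega>0 + 2 * \<gamma>0^2 * \<tau> * b1 * \<omega>0)^2)
    \<and> (4 * \<tau> * \<gamma>0 * \<omega>0^4 + 2 * \<tau> * \<gamma>0^3 * \<omega>0^2 * (b1^2 - 2 * b0))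
          / ((\<gamma>0^2 * b1 - 2 * \<gamma>0 * \<tau> * \<omega>0^2 + 2 * \<gamma>0^3 * \<tau> * b0)^2
             + (2 * \<gamma>0 * \<omega>0 + 2 * \<gamma>0^2 * \<tau> * b1 * \<omega>0)^2) > 0
    \<and> (\<forall>n::int. n \<notin> {1, -1} \<longrightarrow>
         char_fun b u0 v0 s0 (of_int n * \<i> * complex_of_real \<omega>0) \<gamma>0 \<noteq> 0)"
proof -
  have M: "char_fun b u0 v0 s0 = char_quasipoly b0 b1 b2 \<tau>"
    using char_fun_eq_char_quasipoly[of v0 b u0 s0] assms(6) unfolding assms(9-12) by simp
  have "\<tau> > 0" "b2 > 0"
    using assms(4-6,11,12) by simp_all
  have "\<Omega>p = hopf_Omega b0 b1 b2"
    unfolding hopf_Omega_def hopf_delta_def using assms(13,14) by simp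
  moreover have "b1 = 0 \<Longrightarrow> b0 = -1"
    using assms(10) by simp
  ultimately have crossing: "hopf_crossing b0 b1 b2 \<tau> \<gamma>0 \<omega>0"
    using cases hopf_crossing_b1_nonzero[of b2 b1 b0] hopf_crossing_b1_zero[OF \<open>\<tau> > 0\<close>]
      \<open>b2 > 0\<close> by auto
  then have "\<gamma>0 > 0" "\<omega>0 > 0" and root: "imag_root_eqs b0 b1 b2 \<tau> \<gamma>0 \<omega>0"
    and crossing_sign: "2 * \<omega>0^2 + \<gamma>0^2 * (b1^2 - 2 * b0) > 0"
    unfolding hopf_crossing_def by blast+
  note transversality =
    imag_root_transversality[OF \<open>\<gamma>0 > 0\<close> \<open>\<omega>0 > 0\<close> \<open>\<tau> > 0\<close> root crossing_sign]
  have "\<forall>n::int. n \<notin> {1, -1} \<longrightarrow> char_quasipoly b0 b1 b2 \<tau> (of_int n * \<i> * of_real \<omega>0) \<gamma>0 \<noteq> 0"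
    using hopf_crossing_no_harmonic_root[OF crossing] by blast
  then show ?thesis
    unfolding M using root char_quasipoly_imag_eq_0_iff[of \<gamma>0] \<open>\<gamma>0 > 0\<close> transversality by simp
qed

end
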